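(* Let $A$ be a finite nonempty alphabet and $\zeta:A^\omega\to A^\omega$ a bijective $\omega$-sequential function. Then $\zeta^{-1}$ is a bijective $\omega$-sequential function.
   Context: For an infinite word $z$, $z[0,n]$ is its prefix of length $n$. A map $\zeta:A^\omega\to A^\omega$ is $\omega$-sequential if whenever a finite word $u$ is a common prefix of $x$ and $y$, then $\zeta(x)[0,|u|]=\zeta(y)[0,|u|]$. *)

theory Defs
  imports "HOL-Library.Omega_Words_Fun"
begin

definition omega_sequential :: "('a word \<Rightarrow> 'a word) \<Rightarrow> bool" where
  "omega_sequential \<zeta> \<longleftrightarrow>
     (\<forall>x y (u :: 'a list). prefix (length u) x = u \<and> prefix (length u) y = u \<longrightarrow>
        prefix (length u) (\<zeta> x) = prefix (length u) (\<zeta> y))"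

end

theory Submission
  imports Defs
begin

text \<open>For each n, an \<omega>-sequential \<zeta> induces a map on the words of length n, sending u to the
  first n letters of \<zeta>(u w) for any infinite continuation w. If \<zeta> is surjective, so is this
  map, and since there are only finitely many words of length n it is also injective. Hence
  the first n letters of \<zeta> x determine the first n letters of x, which is exactly the
  \<omega>-sequentiality of the inverse.\<close>

lemma omega_sequential_prefix_eq:
  assumes "omega_sequential \<zeta>" and "prefix n x = prefix n y"
  shows "prefix n (\<zeta> x) = prefix n (\<zeta> y)"
proof -
  have "length (prefix n x) = n" by simp
  then show ?thesis
    using assms(1)[unfolded omega_sequential_def, rule_format, of x "prefix n x" y] assms(2)
    by simp
qed

definition prefix_map :: "('a word \<Rightarrow> 'a word) \<Rightarrow> 'a word \<Rightarrow> 'a list \<Rightarrow> 'a list" where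
  "prefix_map \<zeta> w u = prefix (length u) (\<zeta> (u \<frown> w))"

lemma length_prefix_map [simp]: "length (prefix_map \<zeta> w u) = length u"
  by (simp add: prefix_map_def)

lemma prefix_map_prefix:
  assumes "omega_sequential \<zeta>"
  shows "prefix_map \<zeta> w (prefix n z) = prefix n (\<zeta> z)"
  unfolding prefix_map_def
  using omega_sequential_prefix_eq[where x = "prefix n z \<frown> w" and y = z, OF assms] by simp

lemma prefix_map_surj_on:
  assumes "surj \<zeta>" and "omega_sequential \<zeta>"
  shows "prefix_map \<zeta> w ` {u. length u = n} = {u. length u = n}"
proof
  show "prefix_map \<zeta> w ` {u. length u = n} \<subseteq> {u. length u = n}" by auto
  show "{u. length u = n} \<subseteq> prefix_map \<zeta> w ` {u. length u = n}"
  proof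
    fix v :: "'a list"
    assume "v \<in> {u. length u = n}"
    then have "length v = n" by simp
    obtain z where "\<zeta> z = v \<frown> w" using \<open>surj \<zeta>\<close> by (metis surjD)
    then have "prefix_map \<zeta> w (prefix n z) = v"
      using prefix_map_prefix[OF \<open>omega_sequential \<zeta>\<close>] \<open>length v = n\<close>
      by (metis prefix_conc_length)
    then show "v \<in> prefix_map \<zeta> w ` {u. length u = n}" by force
  qed
qed

lemma prefix_map_inj_on:
  fixes \<zeta> :: "('a::finite) word \<Rightarrow> 'a word"
  assumes "surj \<zeta>" and "omega_sequential \<zeta>"
  shows "inj_on (prefix_map \<zeta> w) {u. length u = n}"
proof (rule eq_card_imp_inj_on)
  show "card (prefix_map \<zeta> w ` {u. length u = n}) = card {u :: 'a list. length u = n}"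
    using prefix_map_surj_on[OF assms] by simp
  have "finite {u :: 'a list. set u \<subseteq> UNIV \<and> length u = n}"
    by (rule finite_lists_length_eq) simp
  then show "finite {u :: 'a list. length u = n}" by simp
qed

lemma omega_sequential_prefix_reflect:
  fixes \<zeta> :: "('a::finite) word \<Rightarrow> 'a word"
  assumes "surj \<zeta>" and "omega_sequential \<zeta>" and "prefix n (\<zeta> x) = prefix n (\<zeta> y)"
  shows "prefix n x = prefix n y"
proof -
  have "prefix_map \<zeta> x (prefix n x) = prefix_map \<zeta> x (prefix n y)"
    using assms(3) by (simp add: prefix_map_prefix[OF assms(2)])
  then show ?thesis
    by (rule inj_onD[OF prefix_map_inj_on[OF assms(1,2)]]) simp_all
qed

lemma omega_sequential_inv:
  fixes \<zeta> :: "('a::finite) word \<Rightarrow> 'a word"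
  assumes "surj \<zeta>" and "omega_sequential \<zeta>"
  shows "omega_sequential (inv \<zeta>)"
  unfolding omega_sequential_def
proof (intro allI impI)
  fix x y and u :: "'a list"
  assume "prefix (length u) x = u \<and> prefix (length u) y = u"
  then have "prefix (length u) (\<zeta> (inv \<zeta> x)) = prefix (length u) (\<zeta> (inv \<zeta> y))"
    using \<open>surj \<zeta>\<close> by (simp add: surj_f_inv_f)
  then show "prefix (length u) (inv \<zeta> x) = prefix (length u) (inv \<zeta> y)"
    by (rule omega_sequential_prefix_reflect[OF assms])
qed

theorem lemma4p7:
  fixes \<zeta> :: "('a::finite) word \<Rightarrow> 'a word"
  assumes "bij \<zeta>" and "omega_sequential \<zeta>"
  shows "bij (inv \<zeta>) \<and> omega_sequential (inv \<zeta>)"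
  using bij_imp_bij_inv[OF assms(1)] omega_sequential_inv[OF bij_is_surj[OF assms(1)] assms(2)]
  by blast

end
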